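(* Let $\pi=\pi_1\cdots\pi_n$ be a permutation of $\{1,\dots,n\}$. The Schröder insertion tableau $P(\pi)$ has a single column (i.e. every row of $P(\pi)$ has at most $2$ cells) if and only if $\pi$ avoids both patterns $123$ and $213$.
   Context: A Schröder tableau consists of rows $1,2,\dots$; row $r$ has $\lambda_r$ cells at positions $1,\dots,\lambda_r$, each filled with a number; cells at odd positions are upper triangles, at even positions lower triangles, and positions $2m-1,2m$ form the $m$-th square column. The Schröder insertion tableau $P(\pi)$ is built as follows. Start with $P$ having one row containing $\pi_1$. For $k=2,\dots,n$, insert $\alpha=\pi_k$ into row $i=1$ by the rule: if row $i$ is empty or $\alpha$ is larger than all its entries, place $\alpha$ in a new cell at the end of row $i$ and stop. Otherwise let $j$ be the position in row $i$ of the smallest entry larger than $\alpha$. If $j$ is even: remove the entry $\beta$ at position $j$, write $\alpha$ there, and insert $\beta$ into row $i+1$ by the same rule. If $j$ is odd and position $j+1$ exists in row $i$ with entry $\beta$: move the entry of position $j$ to position $j+1$, write $\alpha$ at position $j$, and insert $\beta$ into row $i+1$. If $j$ is odd and is the last position of row $i$: move the entry of position $j$ into a new cell at position $j+1$ at the end of row $i$, write $\alpha$ at position $j$, and stop. A permutation $\tau$ contains a pattern $\sigma$ of length $k$ if some subsequence $\tau_{i_1}\cdots\tau_{i_k}$ ($i_1<\dots<i_k$) is order-isomorphic to $\sigma$; otherwise it avoids $\sigma$. *)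

theory Defs
  imports Main "HOL-Combinatorics.Multiset_Permutations"
begin

text \<open>The entry at (1-based) position p of a row is stored at list index p - 1.
  So 1-based position j is even iff the 0-based index j - 1 is odd.\<close>

type_synonym row = "nat list"
type_synonym stableau = "row list"

definition smallest_larger_idx :: "nat \<Rightarrow> row \<Rightarrow> nat" where
  "smallest_larger_idx a r =
     (THE k. k < length r \<and> r ! k = Min {x \<in> set r. a < x})"

fun sinsert :: "nat \<Rightarrow> stableau \<Rightarrow> stableau" where
  "sinsert a [] = [[a]]"
| "sinsert a (r # rs) =
     (if r = [] \<or> (\<forall>x\<in>set r. x < a) then (r @ [a]) # rs
      else (let k = smallest_larger_idx a r in
        if odd k then
          \<comment> \<open>1-based position k+1 is even: bump r!k into next row\<close>
          r[k := a] # sinsert (r ! k) rs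
        else if Suc k < length r then
          \<comment> \<open>odd position with a following cell: shift, bump r!(k+1)\<close>
          r[k := a, Suc k := r ! k] # sinsert (r ! Suc k) rs
        else
          \<comment> \<open>odd position, last cell: shift into a new cell, stop\<close>
          (r[k := a] @ [r ! k]) # rs))"

definition schroeder_P :: "nat list \<Rightarrow> stableau" where
  "schroeder_P \<pi> = (case \<pi> of [] \<Rightarrow> [] | x # xs \<Rightarrow> foldl (\<lambda>T a. sinsert a T) [[x]] xs)"

definition contains_pattern :: "nat list \<Rightarrow> nat list \<Rightarrow> bool" where
  "contains_pattern \<tau> \<sigma> \<longleftrightarrow>
     (\<exists>idx :: nat \<Rightarrow> nat. strict_mono_on {..<length \<sigma>} idx \<and>
        (\<forall>i<length \<sigma>. idx i < length \<tau>) \<and>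
        (\<forall>i<length \<sigma>. \<forall>j<length \<sigma>. \<sigma> ! i < \<sigma> ! j \<longleftrightarrow> \<tau> ! idx i < \<tau> ! idx j))"

definition avoids :: "nat list \<Rightarrow> nat list \<Rightarrow> bool" where
  "avoids \<tau> \<sigma> \<longleftrightarrow> \<not> contains_pattern \<tau> \<sigma>"

end

theory Submission
  imports Defs
begin

text \<open>Call an entry of \<open>\<pi>\<close> bad if it exceeds two earlier entries; \<open>\<pi>\<close> contains 123 or 213
  exactly when it has a bad entry. As long as no entry is bad, each new entry is smaller than the
  second smallest earlier one, so it enters the first row and the largest entry of every row is
  pushed one row down: the tableau stays the single column of consecutive pairs of the sorted
  entries. The first bad entry exceeds both cells of the first row and is appended to it, giving a
  row of length three, and later insertions never shorten a row.\<close>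

definition exceeds_two_earlier :: "'a::linorder list \<Rightarrow> bool" where
  "exceeds_two_earlier p \<longleftrightarrow>
     (\<exists>k<length p. \<exists>u\<in>set (take k p). \<exists>v\<in>set (take k p). u \<noteq> v \<and> u < p ! k \<and> v < p ! k)"

lemma exceeds_two_earlier_snoc:
  "exceeds_two_earlier (l @ [a]) \<longleftrightarrow>
     exceeds_two_earlier l \<or> (\<exists>u\<in>set l. \<exists>v\<in>set l. u \<noteq> v \<and> u < a \<and> v < a)"
proof -
  have ex_less_Suc: "\<And>P n. (\<exists>k<Suc n. P k) \<longleftrightarrow> (\<exists>k<n. P k) \<or> P n"
    by (auto simp: less_Suc_eq)
  show ?thesis
    unfolding exceeds_two_earlier_def length_append_singleton ex_less_Suc
    by (simp add: nth_append) blast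
qed

lemma exceeds_two_earlier_if_contains_123_or_213:
  assumes "contains_pattern p [1,2,3] \<or> contains_pattern p [2,1,3]"
  shows "exceeds_two_earlier p"
proof -
  obtain idx :: "nat \<Rightarrow> nat" and \<sigma> :: "nat list" where
    \<sigma>: "\<sigma> = [1,2,3] \<or> \<sigma> = [2,1,3]" and
    mono: "strict_mono_on {..<length \<sigma>} idx" and bound: "\<forall>i<length \<sigma>. idx i < length p" and
    order: "\<forall>i<length \<sigma>. \<forall>j<length \<sigma>. \<sigma> ! i < \<sigma> ! j \<longleftrightarrow> p ! idx i < p ! idx j"
    using assms unfolding contains_pattern_def by blast
  have idx: "idx 0 < idx 2" "idx 1 < idx 2" "idx 2 < length p"
    using mono bound \<sigma> by (auto simp: strict_mono_on_def)
  have in_take: "p ! i \<in> set (take k p)" if "i < k" "k < length p" for i k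
    using that by (auto simp: in_set_conv_nth intro!: exI[of _ i])
  have "p ! idx 0 \<in> set (take (idx 2) p)" "p ! idx 1 \<in> set (take (idx 2) p)"
    using in_take[OF idx(1) idx(3)] in_take[OF idx(2) idx(3)] .
  moreover have "p ! idx 0 \<noteq> p ! idx 1 \<and> p ! idx 0 < p ! idx 2 \<and> p ! idx 1 < p ! idx 2"
    using \<sigma>
  proof
    assume "\<sigma> = [1,2,3]"
    then show ?thesis
      using order[rule_format, of 0 1] order[rule_format, of 0 2] order[rule_format, of 1 2] by simp
  next
    assume "\<sigma> = [2,1,3]"
    then show ?thesis
      using order[rule_format, of 1 0] order[rule_format, of 0 2] order[rule_format, of 1 2] by simp
  qed
  ultimately show ?thesis
    unfolding exceeds_two_earlier_def using idx(3) by blast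
qed

lemma contains_123_or_213_if_exceeds_two_earlier:
  assumes "exceeds_two_earlier p"
  shows "contains_pattern p [1,2,3] \<or> contains_pattern p [2,1,3]"
proof -
  obtain k u v where k: "k < length p" and uv: "u \<in> set (take k p)" "v \<in> set (take k p)"
      "u \<noteq> v" "u < p ! k" "v < p ! k"
    using assms unfolding exceeds_two_earlier_def by blast
  obtain i j where ij: "i < j" "j < k" "p ! i \<noteq> p ! j" "p ! i < p ! k" "p ! j < p ! k"
  proof -
    obtain i j where i: "i < k" "p ! i = u" and j: "j < k" "p ! j = v"
      using uv k by (auto simp: in_set_conv_nth)
    then consider "i < j" | "j < i"
      using uv(3) by (metis linorder_neqE_nat)
    then show thesis
      by cases (use that[of i j] that[of j i] i j uv(3-5) in auto)
  qed
  define idx where "idx t = [i, j, k] ! t" for t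
  have mono: "strict_mono_on {..<3} idx" and bound: "\<forall>t<3. idx t < length p"
    using ij k by (auto simp: strict_mono_on_def idx_def less_Suc_eq numeral_3_eq_3)
  have pattern: "contains_pattern p \<sigma>"
    if "\<forall>t<3. \<forall>t'<3. \<sigma> ! t < \<sigma> ! t' \<longleftrightarrow> p ! idx t < p ! idx t'" and "length \<sigma> = 3"
    for \<sigma> :: "nat list"
    unfolding contains_pattern_def using that mono bound by auto
  consider "p ! i < p ! j" | "p ! j < p ! i" using ij(3) by linarith
  then show ?thesis
  proof cases
    case 1
    then have "contains_pattern p [1,2,3]"
      using ij by (intro pattern) (auto simp: idx_def less_Suc_eq numeral_3_eq_3)
    then show ?thesis ..
  next
    case 2
    then have "contains_pattern p [2,1,3]"
      using ij by (intro pattern) (auto simp: idx_def less_Suc_eq numeral_3_eq_3)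
    then show ?thesis ..
  qed
qed

fun column_tableau :: "nat list \<Rightarrow> stableau" where
  "column_tableau [] = []"
| "column_tableau [a] = [[a]]"
| "column_tableau (a # b # s) = [a, b] # column_tableau s"

lemma length_row_column_tableau: "r \<in> set (column_tableau s) \<Longrightarrow> length r \<le> 2"
  by (induction s rule: column_tableau.induct) auto

lemma sorted_second_less_iff:
  fixes s :: "'a::linorder list"
  assumes "sorted_wrt (<) s" and "2 \<le> length s"
  shows "s ! 1 < a \<longleftrightarrow> (\<exists>u\<in>set s. \<exists>v\<in>set s. u \<noteq> v \<and> u < a \<and> v < a)"
proof
  assume "s ! 1 < a"
  have len: "0 < length s" "1 < length s" using assms(2) by linarith+
  have "s ! 0 < s ! 1" using assms(1) len by (simp add: sorted_wrt_iff_nth_less)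
  then have "s ! 0 \<noteq> s ! 1" "s ! 0 < a" using \<open>s ! 1 < a\<close> by simp_all
  with \<open>s ! 1 < a\<close> show "\<exists>u\<in>set s. \<exists>v\<in>set s. u \<noteq> v \<and> u < a \<and> v < a"
    using nth_mem[OF len(1)] nth_mem[OF len(2)] by blast
next
  assume "\<exists>u\<in>set s. \<exists>v\<in>set s. u \<noteq> v \<and> u < a \<and> v < a"
  then obtain i j where ij: "i < length s" "j < length s" "i \<noteq> j" "s ! i < a" "s ! j < a"
    by (metis in_set_conv_nth)
  have "sorted s" using assms(1) by (simp add: strict_sorted_iff)
  then have "s ! 1 \<le> s ! m" if "1 \<le> m" "m < length s" for m
    using that by (rule sorted_nth_mono)
  moreover have "1 \<le> i \<or> 1 \<le> j" using ij(3) by linarith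
  ultimately show "s ! 1 < a"
    using ij by (auto intro: le_less_trans)
qed

lemma smallest_larger_idx_eqI:
  assumes "distinct r" and "k < length r" and "r ! k = Min {x \<in> set r. a < x}"
  shows "smallest_larger_idx a r = k"
  unfolding smallest_larger_idx_def
proof (rule the_equality)
  fix k' assume "k' < length r \<and> r ! k' = Min {x \<in> set r. a < x}"
  then show "k' = k" using assms nth_eq_iff_index_eq[of r k' k] by simp
qed (use assms in simp)

lemma sinsert_column_tableau:
  "sorted_wrt (<) s \<Longrightarrow> a \<notin> set s \<Longrightarrow> (2 \<le> length s \<longrightarrow> a < s ! 1)
   \<Longrightarrow> sinsert a (column_tableau s) = column_tableau (insort a s)"
proof (induction s arbitrary: a rule: column_tableau.induct)
  case 1
  then show ?case by simp
next
  case (2 x)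
  show ?case
  proof (cases "x < a")
    case True
    then show ?thesis by simp
  next
    case False
    then have "a < x" using 2 by auto
    moreover from this have "{z \<in> set [x]. a < z} = {x}" by auto
    ultimately have "smallest_larger_idx a [x] = 0"
      by (intro smallest_larger_idx_eqI) simp_all
    with \<open>a < x\<close> show ?thesis by simp
  qed
next
  case (3 x y s)
  have xy: "x < y" and ys: "\<forall>z\<in>set s. y < z" and sorted_s: "sorted_wrt (<) s"
    and ay: "a < y" using "3.prems" by auto
  have insort_y: "insort y s = y # s"
    using ys by (cases s) auto
  have "sinsert y (column_tableau s) = column_tableau (y # s)"
    using "3.IH"[of y] sorted_s ys insort_y by force
  moreover have "\<not> (\<forall>z\<in>set [x, y]. z < a)" using ay by auto
  moreover have "smallest_larger_idx a [x, y] = (if x < a then 1 else 0)"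
  proof (rule smallest_larger_idx_eqI)
    have "{z \<in> set [x, y]. a < z} = (if x < a then {y} else {x, y})"
      using xy ay "3.prems"(2) by auto
    then show "[x, y] ! (if x < a then 1 else 0) = Min {z \<in> set [x, y]. a < z}"
      using xy by simp
  qed (use xy in simp_all)
  ultimately show ?case
    using ay xy "3.prems"(2) by auto
qed

lemma length_sinsert: "length T \<le> length (sinsert a T)"
  by (induction T arbitrary: a) (auto simp: Let_def)

lemma length_nth_sinsert:
  "i < length T \<Longrightarrow> length (T ! i) \<le> length (sinsert a T ! i)"
proof (induction T arbitrary: a i)
  case Nil
  then show ?case by simp
next
  case (Cons r T)
  then show ?case
    by (cases i) (auto simp: Let_def)
qed

lemma sinsert_keeps_long_row:
  assumes "r \<in> set T" and "m \<le> length r"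
  shows "\<exists>r'\<in>set (sinsert a T). m \<le> length r'"
proof -
  obtain i where i: "i < length T" "T ! i = r" using assms(1) by (metis in_set_conv_nth)
  then have "sinsert a T ! i \<in> set (sinsert a T)"
    using length_sinsert[of T a] by simp
  moreover have "m \<le> length (sinsert a T ! i)"
    using i assms(2) length_nth_sinsert[of i T a] by simp
  ultimately show ?thesis ..
qed

lemma schroeder_P_foldl: "schroeder_P p = foldl (\<lambda>T a. sinsert a T) [] p"
  by (cases p) (simp_all add: schroeder_P_def)

lemma schroeder_P_snoc: "schroeder_P (p @ [a]) = sinsert a (schroeder_P p)"
  by (simp add: schroeder_P_foldl)

lemma sinsert_column_tableau_sort:
  assumes "distinct (l @ [a])" and "\<not> (\<exists>u\<in>set l. \<exists>v\<in>set l. u \<noteq> v \<and> u < a \<and> v < a)"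
  shows "sinsert a (column_tableau (sort l)) = column_tableau (sort (l @ [a]))"
proof -
  have sorted_l: "sorted_wrt (<) (sort l)" and a_notin: "a \<notin> set l"
    using assms(1) by (simp_all add: strict_sorted_iff)
  have "a < sort l ! 1" if "2 \<le> length (sort l)"
  proof -
    have "\<not> sort l ! 1 < a" using assms(2) sorted_second_less_iff[OF sorted_l that] by simp
    moreover have "sort l ! 1 \<noteq> a" using a_notin that nth_mem[of 1 "sort l"] by auto
    ultimately show ?thesis by simp
  qed
  then have "sinsert a (column_tableau (sort l)) = column_tableau (insort a (sort l))"
    using sinsert_column_tableau[OF sorted_l] a_notin by simp
  moreover have "sort (l @ [a]) = insort a (sort l)"
    by (rule properties_for_sort) (simp_all add: sorted_insort)
  ultimately show ?thesis by simp
qed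

lemma sinsert_column_tableau_sort_long_row:
  assumes "distinct l" and "\<exists>u\<in>set l. \<exists>v\<in>set l. u \<noteq> v \<and> u < a \<and> v < a"
  shows "\<exists>r\<in>set (sinsert a (column_tableau (sort l))). 3 \<le> length r"
proof -
  have sorted_l: "sorted_wrt (<) (sort l)"
    using assms(1) by (simp add: strict_sorted_iff)
  obtain u v where "u \<in> set l" "v \<in> set l" "u \<noteq> v" using assms(2) by blast
  then have "card {u, v} \<le> length l"
    using card_mono[of "set l" "{u, v}"] card_length[of l] by simp
  then have len: "2 \<le> length (sort l)" using \<open>u \<noteq> v\<close> by simp
  then obtain s0 s1 s where s: "sort l = s0 # s1 # s"
    by (metis One_nat_def Suc_1 Suc_le_length_iff)
  have "sort l ! 1 < a"
    using assms(2) sorted_second_less_iff[OF sorted_l len] by simp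
  then have "s1 < a" using s by simp
  moreover have "s0 < s1" using sorted_l s by simp
  ultimately have "sinsert a (column_tableau (sort l)) = [s0, s1, a] # column_tableau s"
    using s by simp
  then show ?thesis by simp
qed

lemma schroeder_P_column_or_long_row:
  assumes "distinct p"
  shows "(\<not> exceeds_two_earlier p \<longrightarrow> schroeder_P p = column_tableau (sort p)) \<and>
         (exceeds_two_earlier p \<longrightarrow> (\<exists>r\<in>set (schroeder_P p). 3 \<le> length r))"
  using assms
proof (induction p rule: rev_induct)
  case Nil
  then show ?case by (simp add: schroeder_P_def exceeds_two_earlier_def)
next
  case (snoc a l)
  have IH_column: "\<not> exceeds_two_earlier l \<Longrightarrow> schroeder_P l = column_tableau (sort l)"
    and IH_long: "exceeds_two_earlier l \<Longrightarrow> \<exists>r\<in>set (schroeder_P l). 3 \<le> length r"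
    using snoc by auto
  let ?two_below = "\<exists>u\<in>set l. \<exists>v\<in>set l. u \<noteq> v \<and> u < a \<and> v < a"
  consider "exceeds_two_earlier l" | "\<not> exceeds_two_earlier l" "?two_below"
    | "\<not> exceeds_two_earlier l" "\<not> ?two_below" by blast
  then show ?case
  proof cases
    case 1
    then obtain r where "r \<in> set (schroeder_P l)" "3 \<le> length r" using IH_long by blast
    then have "\<exists>r'\<in>set (schroeder_P (l @ [a])). 3 \<le> length r'"
      unfolding schroeder_P_snoc by (rule sinsert_keeps_long_row)
    with 1 show ?thesis by (simp add: exceeds_two_earlier_snoc)
  next
    case 2
    then show ?thesis
      using sinsert_column_tableau_sort_long_row[of l a] snoc.prems IH_column
      by (simp add: exceeds_two_earlier_snoc schroeder_P_snoc)
  next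
    case 3
    then have "\<not> exceeds_two_earlier (l @ [a])"
      using exceeds_two_earlier_snoc by blast
    then show ?thesis
      using 3 sinsert_column_tableau_sort[OF snoc.prems] IH_column
      by (simp add: schroeder_P_snoc)
  qed
qed

theorem mainTheorem9:
  fixes \<pi> :: "nat list" and n :: nat
  assumes "\<pi> \<in> permutations_of_set {1..n}"
  shows "(\<forall>row \<in> set (schroeder_P \<pi>). length row \<le> 2) \<longleftrightarrow>
         (avoids \<pi> [1,2,3] \<and> avoids \<pi> [2,1,3])"
proof -
  have "distinct \<pi>" using assms by (simp add: permutations_of_set_def)
  then have "(\<forall>row \<in> set (schroeder_P \<pi>). length row \<le> 2) \<longleftrightarrow> \<not> exceeds_two_earlier \<pi>"
    using schroeder_P_column_or_long_row[of \<pi>] length_row_column_tableau by fastforce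
  then show ?thesis
    using exceeds_two_earlier_if_contains_123_or_213 contains_123_or_213_if_exceeds_two_earlier
    unfolding avoids_def by blast
qed

end
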